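(* Let $f$ be as in the standing setting and quasi-strongly convex on $X$ with constant $\kappa_f>0$, i.e. $f^*\ge f(x)+\langle\nabla f(x),\bar x-x\rangle+\frac{\kappa_f}{2}\|x-\bar x\|^2$ for all $x\in X$. Let $x^0\in X$ and $x^{k+1}=[x^k-\frac1{L_f}\nabla f(x^k)]_X$ for $k\ge0$ (projected gradient method with constant step size $1/L_f$), and $\bar x^k=[x^k]_{X^*}$. Then, with $\mu_f=\kappa_f/L_f$, $$\|x^k-\bar x^k\|^2\le\left(\frac{1-\mu_f}{1+\mu_f}\right)^k\|x^0-\bar x^0\|^2\qquad\forall k\ge0.$$
   Context: Standing setting: $X\subseteq\mathbb{R}^n$ is a nonempty closed convex set; $f:X\to\mathbb{R}$ is convex and continuously differentiable, with $L_f$-Lipschitz continuous gradient on $X$ ($L_f>0$). Consider $f^*=\min_{x\in X}f(x)$ with optimal set $X^*$ nonempty and closed and $f^*$ finite. $\|\cdot\|$ is the Euclidean norm, $[u]_S$ is the Euclidean projection onto a closed convex set $S$, and $\bar x=[x]_{X^*}$. *)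

theory Defs
  imports "HOL-Analysis.Analysis"
begin

fun pgm :: "'a::euclidean_space set \<Rightarrow> ('a \<Rightarrow> 'a) \<Rightarrow> real \<Rightarrow> 'a \<Rightarrow> nat \<Rightarrow> 'a" where
  "pgm X g L x0 0 = x0"
| "pgm X g L x0 (Suc k) = closest_point X (pgm X g L x0 k - (1 / L) *\<^sub>R g (pgm X g L x0 k))"

definition optval :: "('a \<Rightarrow> real) \<Rightarrow> 'a set \<Rightarrow> real" where
  "optval f X = (INF x\<in>X. f x)"

definition optset :: "('a \<Rightarrow> real) \<Rightarrow> 'a set \<Rightarrow> 'a set" where
  "optset f X = {x \<in> X. f x = optval f X}"

end

theory Submission
  imports Defs
begin

text \<open>Let \<open>x\<^sup>+\<close> be the projected gradient step from \<open>x\<close> and \<open>P\<close> the optimal set. The smoothness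
  bound \<open>f x\<^sup>+ \<le> f x + \<langle>\<nabla>f x, x\<^sup>+ - x\<rangle> + L/2 \<parallel>x\<^sup>+ - x\<parallel>\<^sup>2\<close>, the variational inequality of the projection
  onto \<open>X\<close> tested at \<open>[x]\<^sub>P\<close>, and quasi-strong convexity at \<open>x\<close> combine to
  \<open>f x\<^sup>+ - f\<^sup>* \<le> L/2 \<parallel>x - [x]\<^sub>P\<parallel>\<^sup>2 - L/2 \<parallel>x\<^sup>+ - [x]\<^sub>P\<parallel>\<^sup>2 - \<kappa>/2 \<parallel>x - [x]\<^sub>P\<parallel>\<^sup>2\<close>.
  Quasi-strong convexity also yields quadratic growth \<open>f y - f\<^sup>* \<ge> \<kappa>/2 \<parallel>y - [y]\<^sub>P\<parallel>\<^sup>2\<close>, by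
  integrating it along the segment from \<open>[y]\<^sub>P\<close> to \<open>y\<close> (every point of which projects to \<open>[y]\<^sub>P\<close>).
  Applying growth at \<open>y = x\<^sup>+\<close> and \<open>\<parallel>x\<^sup>+ - [x\<^sup>+]\<^sub>P\<parallel> \<le> \<parallel>x\<^sup>+ - [x]\<^sub>P\<parallel>\<close> gives the contraction
  \<open>(L + \<kappa>) dist(x\<^sup>+, P)\<^sup>2 \<le> (L - \<kappa>) dist(x, P)\<^sup>2\<close>.\<close>

lemma has_real_derivative_along_line:
  fixes f :: "'a::real_inner \<Rightarrow> real"
  assumes "(f has_derivative (\<lambda>h. G \<bullet> h)) (at (a + t *\<^sub>R v))"
  shows "((\<lambda>s. f (a + s *\<^sub>R v)) has_real_derivative G \<bullet> v) (at t)"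
proof -
  have "((\<lambda>s. a + s *\<^sub>R v) has_derivative (\<lambda>h. h *\<^sub>R v)) (at t)"
    by (auto intro!: derivative_eq_intros)
  from has_derivative_compose[OF this assms]
  have "((\<lambda>s. f (a + s *\<^sub>R v)) has_derivative (\<lambda>h. G \<bullet> (h *\<^sub>R v))) (at t)"
    by (simp add: o_def)
  moreover have "(\<lambda>h. G \<bullet> (h *\<^sub>R v)) = (*) (G \<bullet> v)"
    by (auto simp: fun_eq_iff)
  ultimately show ?thesis
    by (simp add: has_field_derivative_def)
qed

lemma closest_point_eqI:
  fixes S :: "'a::euclidean_space set"
  assumes "convex S" "closed S" "x \<in> S" "\<And>z. z \<in> S \<Longrightarrow> (a - x) \<bullet> (z - x) \<le> 0"
  shows "closest_point S a = x"
proof -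
  have "dist a x \<le> dist a z" if z: "z \<in> S" for z
  proof -
    have "(norm (a - z))\<^sup>2 = (norm (a - x))\<^sup>2 - 2 * ((a - x) \<bullet> (z - x)) + (norm (z - x))\<^sup>2"
      by (simp add: power2_norm_eq_inner inner_diff_left inner_diff_right inner_commute)
    then have "(norm (a - x))\<^sup>2 \<le> (norm (a - z))\<^sup>2"
      using assms(4)[OF z] by (smt (verit) zero_le_power2)
    then show ?thesis
      by (simp add: dist_norm)
  qed
  then show ?thesis
    using closest_point_unique[OF assms(1-3)] by simp
qed

lemma closest_point_on_ray:
  fixes S :: "'a::euclidean_space set"
  assumes "convex S" "closed S" "S \<noteq> {}" "0 \<le> t"
  shows "closest_point S (closest_point S x + t *\<^sub>R (x - closest_point S x)) = closest_point S x"
proof (rule closest_point_eqI[OF assms(1,2)])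
  show "closest_point S x \<in> S"
    using assms by (simp add: closest_point_in_set)
  fix z assume "z \<in> S"
  then have "(x - closest_point S x) \<bullet> (z - closest_point S x) \<le> 0"
    using assms closest_point_dot by blast
  then show "(closest_point S x + t *\<^sub>R (x - closest_point S x) - closest_point S x)
      \<bullet> (z - closest_point S x) \<le> 0"
    using assms(4) by (simp add: mult_nonneg_nonpos)
qed

lemma lipschitz_gradient_upper_bound:
  fixes f :: "'a::euclidean_space \<Rightarrow> real"
  assumes "convex X"
    and f_grad: "\<And>x. x \<in> X \<Longrightarrow> (f has_derivative (\<lambda>h. g x \<bullet> h)) (at x)"
    and g_lip: "\<And>x y. x \<in> X \<Longrightarrow> y \<in> X \<Longrightarrow> norm (g x - g y) \<le> L * norm (x - y)"
    and x: "x \<in> X" and y: "y \<in> X"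
  shows "f y \<le> f x + g x \<bullet> (y - x) + L / 2 * (norm (y - x))\<^sup>2"
proof -
  define v where "v = y - x"
  define \<phi> where "\<phi> t = f (x + t *\<^sub>R v) - t * (g x \<bullet> v) - L / 2 * t\<^sup>2 * (norm v)\<^sup>2" for t
  have segX: "x + t *\<^sub>R v \<in> X" if "t \<in> {0..1}" for t
  proof -
    have "x + t *\<^sub>R v = (1 - t) *\<^sub>R x + t *\<^sub>R y"
      by (simp add: v_def algebra_simps)
    then show ?thesis
      using convexD_alt[OF assms(1) x y, of t] that by auto
  qed
  have "\<phi> 1 \<le> \<phi> 0"
  proof (rule deriv_nonpos_imp_antimono[where g = \<phi>
        and g' = "\<lambda>t. g (x + t *\<^sub>R v) \<bullet> v - g x \<bullet> v - L * t * (norm v)\<^sup>2"])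
    fix t :: real assume t: "t \<in> {0..1}"
    note line = has_real_derivative_along_line[OF f_grad[OF segX[OF t]]]
    show "(\<phi> has_real_derivative g (x + t *\<^sub>R v) \<bullet> v - g x \<bullet> v - L * t * (norm v)\<^sup>2) (at t)"
      unfolding \<phi>_def by (rule derivative_eq_intros line | simp)+
    have "(g (x + t *\<^sub>R v) - g x) \<bullet> v \<le> norm (g (x + t *\<^sub>R v) - g x) * norm v"
      by (rule norm_cauchy_schwarz)
    also have "\<dots> \<le> L * norm (t *\<^sub>R v) * norm v"
      using g_lip[OF segX[OF t] x] by (intro mult_right_mono) auto
    also have "\<dots> = L * t * (norm v)\<^sup>2"
      using t by (simp add: power2_eq_square)
    finally show "g (x + t *\<^sub>R v) \<bullet> v - g x \<bullet> v - L * t * (norm v)\<^sup>2 \<le> 0"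
      by (simp add: inner_diff_left)
  qed simp
  then show ?thesis
    by (simp add: \<phi>_def v_def)
qed

text \<open>\<open>\<psi> t / t - c t\<close> is nondecreasing on \<open>]0, 1]\<close> and bounded below by \<open>-c t\<close>.\<close>

lemma slope_inequality_lower_bound:
  fixes \<psi> \<psi>' :: "real \<Rightarrow> real"
  assumes deriv: "\<And>t. 0 < t \<Longrightarrow> t \<le> 1 \<Longrightarrow> (\<psi> has_real_derivative \<psi>' t) (at t)"
    and nonneg: "\<And>t. 0 < t \<Longrightarrow> t \<le> 1 \<Longrightarrow> 0 \<le> \<psi> t"
    and slope: "\<And>t. 0 < t \<Longrightarrow> t \<le> 1 \<Longrightarrow> \<psi> t + c * t\<^sup>2 \<le> t * \<psi>' t"
  shows "c \<le> \<psi> 1"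
proof -
  have mono: "\<psi> s / s - c * s \<le> \<psi> 1 - c" if s: "0 < s" "s \<le> 1" for s
  proof -
    have "\<psi> s / s - c * s \<le> \<psi> 1 / 1 - c * 1"
    proof (rule deriv_nonneg_imp_mono[where g = "\<lambda>t. \<psi> t / t - c * t"
          and g' = "\<lambda>t. \<psi>' t / t - \<psi> t / t\<^sup>2 - c"])
      fix t assume "t \<in> {s..1}"
      then have t: "0 < t" "t \<le> 1" using s by auto
      show "((\<lambda>t. \<psi> t / t - c * t) has_real_derivative \<psi>' t / t - \<psi> t / t\<^sup>2 - c) (at t)"
        using t by (auto intro!: derivative_eq_intros deriv simp: field_simps power2_eq_square)
      have "\<psi>' t / t - \<psi> t / t\<^sup>2 - c = (t * \<psi>' t - (\<psi> t + c * t\<^sup>2)) / t\<^sup>2"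
        using t by (simp add: field_simps power2_eq_square)
      then show "0 \<le> \<psi>' t / t - \<psi> t / t\<^sup>2 - c"
        using slope[OF t] by simp
    qed (use s in auto)
    then show ?thesis by simp
  qed
  show ?thesis
  proof (cases "c \<le> 0")
    case True
    then show ?thesis using nonneg[of 1] by simp
  next
    case False
    show ?thesis
    proof (rule field_le_epsilon)
      fix e :: real assume e: "0 < e"
      define s where "s = min 1 (e / c)"
      have s: "0 < s" "s \<le> 1" and "c * s \<le> e"
        using False e by (auto simp: s_def min_def field_simps)
      moreover have "0 \<le> \<psi> s / s"
        using nonneg[OF s] s by simp
      ultimately show "c \<le> \<psi> 1 + e"
        using mono[OF s] by linarith
    qed
  qed
qed

lemma quasi_strongly_convex_imp_quadratic_growth:
  fixes f :: "'a::euclidean_space \<Rightarrow> real"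
  assumes "convex X"
    and f_grad: "\<And>x. x \<in> X \<Longrightarrow> (f has_derivative (\<lambda>h. g x \<bullet> h)) (at x)"
    and P: "P \<subseteq> X" "convex P" "closed P" "P \<noteq> {}"
    and lower: "\<And>y. y \<in> X \<Longrightarrow> fs \<le> f y"
    and qsc: "\<And>x. x \<in> X \<Longrightarrow>
       fs \<ge> f x + g x \<bullet> (closest_point P x - x) + \<kappa> / 2 * (norm (x - closest_point P x))\<^sup>2"
    and x: "x \<in> X"
  shows "\<kappa> / 2 * (norm (x - closest_point P x))\<^sup>2 \<le> f x - fs"
proof -
  define p where "p = closest_point P x"
  define v where "v = x - p"
  have "p \<in> X"
    using P closest_point_in_set p_def by blast
  then have segX: "p + t *\<^sub>R v \<in> X" if "0 \<le> t" "t \<le> 1" for t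
    using convexD_alt[OF assms(1) \<open>p \<in> X\<close> x, of t] that by (simp add: v_def algebra_simps)
  have "\<kappa> / 2 * (norm v)\<^sup>2 \<le> f (p + 1 *\<^sub>R v) - fs"
  proof (rule slope_inequality_lower_bound[where \<psi> = "\<lambda>t. f (p + t *\<^sub>R v) - fs"
        and \<psi>' = "\<lambda>t. g (p + t *\<^sub>R v) \<bullet> v"])
    fix t :: real assume t: "0 < t" "t \<le> 1"
    show "((\<lambda>t. f (p + t *\<^sub>R v) - fs) has_real_derivative g (p + t *\<^sub>R v) \<bullet> v) (at t)"
      using has_real_derivative_along_line[OF f_grad[OF segX]] t
      by (auto intro!: derivative_eq_intros)
    show "0 \<le> f (p + t *\<^sub>R v) - fs"
      using lower segX t by simp
    have "closest_point P (p + t *\<^sub>R v) = p"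
      using closest_point_on_ray[OF P(2-4), of t x] t by (simp add: p_def v_def)
    then show "f (p + t *\<^sub>R v) - fs + \<kappa> / 2 * (norm v)\<^sup>2 * t\<^sup>2 \<le> t * (g (p + t *\<^sub>R v) \<bullet> v)"
      using qsc[OF segX[of t]] t by (simp add: power_mult_distrib algebra_simps)
  qed
  then show ?thesis
    by (simp add: v_def p_def)
qed

lemma projected_gradient_step_value_bound:
  fixes f :: "'a::euclidean_space \<Rightarrow> real"
  assumes X: "convex X" "closed X" "X \<noteq> {}"
    and f_grad: "\<And>x. x \<in> X \<Longrightarrow> (f has_derivative (\<lambda>h. g x \<bullet> h)) (at x)"
    and g_lip: "\<And>x y. x \<in> X \<Longrightarrow> y \<in> X \<Longrightarrow> norm (g x - g y) \<le> L * norm (x - y)"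
    and L_pos: "L > 0"
    and x: "x \<in> X" and p: "p \<in> X"
    and below: "fs \<ge> f x + g x \<bullet> (p - x) + \<kappa> / 2 * (norm (x - p))\<^sup>2"
    and x'_def: "x' = closest_point X (x - (1 / L) *\<^sub>R g x)"
  shows "f x' - fs \<le> (L - \<kappa>) / 2 * (norm (x - p))\<^sup>2 - L / 2 * (norm (x' - p))\<^sup>2"
proof -
  define a where "a = x - x'"
  define b where "b = x' - p"
  have x'X: "x' \<in> X"
    unfolding x'_def using X by (simp add: closest_point_in_set)
  have "((x - (1 / L) *\<^sub>R g x) - x') \<bullet> (p - x') \<le> 0"
    unfolding x'_def using closest_point_dot[OF X(1,2) p] .
  moreover have "((x - (1 / L) *\<^sub>R g x) - x') \<bullet> (p - x') = (1 / L) * (g x \<bullet> b) - a \<bullet> b"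
    by (simp add: a_def b_def inner_diff_left inner_diff_right inner_commute algebra_simps)
  ultimately have "(1 / L) * (g x \<bullet> b) \<le> a \<bullet> b"
    by simp
  then have proj: "g x \<bullet> b \<le> L * (a \<bullet> b)"
    using L_pos by (simp add: field_simps)
  have smooth: "f x' \<le> f x + g x \<bullet> (x' - x) + L / 2 * (norm a)\<^sup>2"
    using lipschitz_gradient_upper_bound[OF X(1) f_grad g_lip x x'X]
    by (simp add: a_def norm_minus_commute)
  have "g x \<bullet> (x' - x) - g x \<bullet> (p - x) = g x \<bullet> b"
    by (simp add: b_def inner_diff_right)
  moreover have "(norm (x - p))\<^sup>2 = (norm a)\<^sup>2 + 2 * (a \<bullet> b) + (norm b)\<^sup>2"
    unfolding a_def b_def
    by (simp add: power2_norm_eq_inner inner_diff_left inner_diff_right inner_commute)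
  then have "(L - \<kappa>) / 2 * (norm (x - p))\<^sup>2
      = L / 2 * (norm a)\<^sup>2 + L * (a \<bullet> b) + L / 2 * (norm b)\<^sup>2 - \<kappa> / 2 * (norm (x - p))\<^sup>2"
    by (simp add: field_simps)
  ultimately show ?thesis
    using below smooth proj unfolding b_def by linarith
qed

lemma projected_gradient_step_contracts:
  fixes f :: "'a::euclidean_space \<Rightarrow> real"
  assumes X: "convex X" "closed X" "X \<noteq> {}"
    and f_grad: "\<And>x. x \<in> X \<Longrightarrow> (f has_derivative (\<lambda>h. g x \<bullet> h)) (at x)"
    and g_lip: "\<And>x y. x \<in> X \<Longrightarrow> y \<in> X \<Longrightarrow> norm (g x - g y) \<le> L * norm (x - y)"
    and L_pos: "L > 0"
    and P: "P \<subseteq> X" "convex P" "closed P" "P \<noteq> {}"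
    and lower: "\<And>y. y \<in> X \<Longrightarrow> fs \<le> f y"
    and qsc: "\<And>x. x \<in> X \<Longrightarrow>
       fs \<ge> f x + g x \<bullet> (closest_point P x - x) + \<kappa> / 2 * (norm (x - closest_point P x))\<^sup>2"
    and x: "x \<in> X"
  shows "(\<kappa> + L) * (norm (closest_point X (x - (1 / L) *\<^sub>R g x)
            - closest_point P (closest_point X (x - (1 / L) *\<^sub>R g x))))\<^sup>2
         \<le> (L - \<kappa>) * (norm (x - closest_point P x))\<^sup>2"
proof -
  define x' where "x' = closest_point X (x - (1 / L) *\<^sub>R g x)"
  define p where "p = closest_point P x"
  define D' where "D' = (norm (x' - closest_point P x'))\<^sup>2"
  have pP: "p \<in> P"
    unfolding p_def using P by (simp add: closest_point_in_set)
  have x'X: "x' \<in> X"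
    unfolding x'_def using X by (simp add: closest_point_in_set)
  have value_bound: "f x' - fs \<le> (L - \<kappa>) / 2 * (norm (x - p))\<^sup>2 - L / 2 * (norm (x' - p))\<^sup>2"
    using projected_gradient_step_value_bound[OF X f_grad g_lip L_pos x _ _ x'_def] pP P(1) qsc[OF x]
    by (auto simp: p_def)
  have growth: "\<kappa> / 2 * D' \<le> f x' - fs"
    unfolding D'_def by (rule quasi_strongly_convex_imp_quadratic_growth[OF X(1) f_grad P lower qsc x'X])
  have "dist x' (closest_point P x') \<le> dist x' p"
    using closest_point_le[OF P(3) pP] .
  then have "D' \<le> (norm (x' - p))\<^sup>2"
    unfolding D'_def by (simp add: dist_norm power_mono)
  then have "L / 2 * D' \<le> L / 2 * (norm (x' - p))\<^sup>2"
    using L_pos by (intro mult_left_mono) auto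
  with value_bound growth show ?thesis
    by (simp add: D'_def p_def x'_def algebra_simps)
qed

text \<open>If \<open>r < 0\<close> the hypotheses force \<open>d = 0\<close>; no sign condition on \<open>r\<close> is needed.\<close>

lemma geometric_decay:
  fixes d :: "nat \<Rightarrow> real"
  assumes nonneg: "\<And>k. 0 \<le> d k" and step: "\<And>k. d (Suc k) \<le> r * d k"
  shows "d k \<le> r ^ k * d 0"
proof (cases "0 \<le> r")
  case True
  show ?thesis
  proof (induction k)
    case (Suc k)
    have "d (Suc k) \<le> r * d k" by (rule step)
    also have "\<dots> \<le> r * (r ^ k * d 0)" using Suc True by (rule mult_left_mono)
    finally show ?case by simp
  qed simp
next
  case False
  have "d k = 0" for k
    using step[of k] nonneg[of k] nonneg[of "Suc k"] False
    by (smt (verit) mult_neg_pos)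
  then show ?thesis by simp
qed

lemma optval_le:
  assumes "bdd_below (f ` X)" "x \<in> X"
  shows "optval f X \<le> f x"
  unfolding optval_def using assms by (rule cINF_lower)

lemma convex_optset:
  assumes "convex X" "convex_on X f" "bdd_below (f ` X)"
  shows "convex (optset f X)"
proof (rule convexI)
  fix u v :: 'a and a b :: real
  assume "u \<in> optset f X" "v \<in> optset f X" and ab: "0 \<le> a" "0 \<le> b" "a + b = 1"
  then have uv: "u \<in> X" "v \<in> X" "f u = optval f X" "f v = optval f X"
    by (auto simp: optset_def)
  have w: "a *\<^sub>R u + b *\<^sub>R v \<in> X"
    using convexD[OF assms(1) uv(1,2) ab] .
  have a: "a = 1 - b"
    using ab by simp
  have "f (a *\<^sub>R u + b *\<^sub>R v) \<le> a * f u + b * f v"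
    using convex_onD[OF assms(2), of b u v] uv(1,2) ab unfolding a by simp
  also have "\<dots> = optval f X"
    using uv ab by (metis distrib_right mult_1)
  finally show "a *\<^sub>R u + b *\<^sub>R v \<in> optset f X"
    using optval_le[OF assms(3) w] w by (simp add: optset_def)
qed

theorem theorem11:
  fixes X :: "'a::euclidean_space set" and f :: "'a \<Rightarrow> real" and g :: "'a \<Rightarrow> 'a"
    and L \<kappa> :: real and x0 :: 'a
  assumes X_ne: "X \<noteq> {}" and X_closed: "closed X" and X_convex: "convex X"
    and f_convex: "convex_on X f"
    and f_grad: "\<And>x. x \<in> X \<Longrightarrow> (f has_derivative (\<lambda>h. g x \<bullet> h)) (at x)"
    and g_cont: "continuous_on X g"
    and L_pos: "L > 0"
    and g_lip: "\<And>x y. x \<in> X \<Longrightarrow> y \<in> X \<Longrightarrow> norm (g x - g y) \<le> L * norm (x - y)"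
    and f_bdd: "bdd_below (f ` X)"
    and Xs_ne: "optset f X \<noteq> {}" and Xs_closed: "closed (optset f X)"
    and \<kappa>_pos: "\<kappa> > 0"
    and qsc: "\<And>x. x \<in> X \<Longrightarrow>
       optval f X \<ge> f x + g x \<bullet> (closest_point (optset f X) x - x)
                 + \<kappa> / 2 * (norm (x - closest_point (optset f X) x))\<^sup>2"
    and x0_in: "x0 \<in> X"
  shows "\<forall>k. (norm (pgm X g L x0 k - closest_point (optset f X) (pgm X g L x0 k)))\<^sup>2
          \<le> ((1 - \<kappa> / L) / (1 + \<kappa> / L)) ^ k * (norm (x0 - closest_point (optset f X) x0))\<^sup>2"
proof
  fix n
  define d where "d k = (norm (pgm X g L x0 k - closest_point (optset f X) (pgm X g L x0 k)))\<^sup>2" for k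
  have P: "optset f X \<subseteq> X" "convex (optset f X)" "closed (optset f X)" "optset f X \<noteq> {}"
    using convex_optset[OF X_convex f_convex f_bdd] Xs_closed Xs_ne by (auto simp: optset_def)
  have iter_in_X: "pgm X g L x0 k \<in> X" for k
    by (induction k) (simp_all add: x0_in closest_point_in_set[OF X_closed X_ne])
  have contraction: "(\<kappa> + L) * d (Suc k) \<le> (L - \<kappa>) * d k" for k
    unfolding d_def pgm.simps
    by (rule projected_gradient_step_contracts[OF X_convex X_closed X_ne f_grad g_lip L_pos P
          optval_le[OF f_bdd] qsc iter_in_X])
  have ratio: "(1 - \<kappa> / L) / (1 + \<kappa> / L) = (L - \<kappa>) / (L + \<kappa>)"
  proof -
    have "1 - \<kappa> / L = (L - \<kappa>) / L" "1 + \<kappa> / L = (L + \<kappa>) / L"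
      using L_pos by (simp_all add: field_simps)
    then show ?thesis
      using L_pos by simp
  qed
  have "d (Suc k) \<le> (1 - \<kappa> / L) / (1 + \<kappa> / L) * d k" for k
    using contraction[of k] L_pos \<kappa>_pos by (simp add: ratio pos_le_divide_eq mult.commute add.commute)
  then have "d n \<le> ((1 - \<kappa> / L) / (1 + \<kappa> / L)) ^ n * d 0"
    by (rule geometric_decay[rotated]) (simp add: d_def)
  then show "(norm (pgm X g L x0 n - closest_point (optset f X) (pgm X g L x0 n)))\<^sup>2
      \<le> ((1 - \<kappa> / L) / (1 + \<kappa> / L)) ^ n * (norm (x0 - closest_point (optset f X) x0))\<^sup>2"
    by (simp add: d_def)
qed

end
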